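(* For each singular face $F$, the inclusion $(\mathbb C^* )^{F^c}\hookrightarrow\mathbb C^d_\Delta$ induces a homeomorphism from the orbit space $(\mathbb C^* )^{F^c}/N_{\mathbb C}$ onto $\mathcal T_F$; under the isomorphism $T^d_{\mathbb C}/N_{\mathbb C}\cong\mathfrak d_{\mathbb C}/Q$ induced by $\pi_{\mathbb C}$, this is the orbit of the complex quasitorus $D_{\mathbb C}=\mathfrak d_{\mathbb C}/Q$ corresponding to $F$. The maximal piece $\mathcal T_{\max}$ is the union of the $D_{\mathbb C}$-orbits $(\mathbb C^* )^{G^c}/N_{\mathbb C}$ corresponding to the regular faces $G$; in particular it contains the orbit corresponding to the interior of $\Delta$.
   Context: Let $\mathfrak d$ be an $n$-dimensional real vector space, $\mathfrak d^*$ its dual and $\mathfrak d_{\mathbb C}=\mathfrak d\oplus i\mathfrak d$. A quasilattice in $\mathfrak d$ is the $\mathbb Z$-submodule generated by a finite set of vectors spanning $\mathfrak d$. Let $\Delta\subset\mathfrak d^*$ be an $n$-dimensional convex polytope (not necessarily rational or simple) with $d$ facets, written as $\Delta=\bigcap_{j=1}^d\{\mu\in\mathfrak d^*:\langle\mu,X_j\rangle\ge\lambda_j\}$, where $X_1,\dots,X_d\in\mathfrak d$ are chosen inward-pointing normals and $\lambda_j\in\mathbb R$; let $Q$ be a quasilattice containing $X_1,\dots,X_d$. For each face $F$ let $I_F$ be such that $F=\{\mu\in\Delta:\langle\mu,X_j\rangle=\lambda_j\iff j\in I_F\}$ (interior: $I_F=\emptyset$). A $p$-dimensional face is regular if $|I_F|=n-p$,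 singular if $|I_F|>n-p$. $(\mathbb C^* )^{F^c}=\{z\in\mathbb C^d: z_j=0\ (j\in I_F),\ z_j\neq 0\ (j\notin I_F)\}$; $\mathbb C^d_\Delta=\bigcup_F\{z: z_j\ne0\ \forall j\notin I_F\}$ (all faces). $\pi:\mathbb R^d\to\mathfrak d$, $\pi_{\mathbb C}:\mathbb C^d\to\mathfrak d_{\mathbb C}$, $e_j\mapsto X_j$; $\mathfrak n=\ker\pi$. $T^d_{\mathbb C}=\mathbb C^d/\mathbb Z^d$ (projection $\exp$) acts on $\mathbb C^d$ by $\exp(Z)\cdot z=(e^{2\pi iZ_j}z_j)_j$; $T^d=\mathbb R^d/\mathbb Z^d$. $N=\ker(T^d\to\mathfrak d/Q)$, $N_{\mathbb C}=\ker(T^d_{\mathbb C}\to\mathfrak d_{\mathbb C}/Q)$, $A=\exp(i\mathfrak n)$. On $\mathbb C^d_\Delta$, $z\sim w$ iff $N\,\overline{Az}\cap\overline{Aw}\ne\emptyset$ (closures in $\mathbb C^d_\Delta$); $X_\Delta=\mathbb C^d_\Delta/\!/N_{\mathbb C}$ is the quotient with the quotient topology. For singular $F$, $\mathcal T_F$ is the set of classes of $z$ with $\overline{Az}\cap(\mathbb C^* )^{F^c}\neq\emptyset$; $\mathcal T_{\max}$ is the image of $\bigcup_{G\text{ regular}}(\mathbb C^* )^{G^c}$. The $N_{\mathbb C}$-orbit spaces $(\mathbb C^* )^{F^c}/N_{\mathbb C}$ carry the quotient topology. *)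

theory Defs
  imports "HOL-Analysis.Analysis"
begin

text \<open>The real vector space d is real^'n, its dual is identified with real^'n
 via the inner product. Facets are indexed by a finite type 'd, so C^d is complex^'d.
 A (relatively open) face F of the polytope is encoded by its index set I_F.\<close>

definition zspan :: "('a::real_vector) set \<Rightarrow> 'a set" where
  "zspan S = {x. \<exists>c::'a \<Rightarrow> int. x = (\<Sum>v\<in>S. real_of_int (c v) *\<^sub>R v)}"

definition quasilattice :: "(real^'n) set \<Rightarrow> bool" where
  "quasilattice Q \<longleftrightarrow> (\<exists>S. finite S \<and> span S = UNIV \<and> Q = zspan S)"

definition Delta :: "('d::finite \<Rightarrow> real^'n) \<Rightarrow> ('d \<Rightarrow> real) \<Rightarrow> (real^'n) set" where
  "Delta X lam = {\<mu>. \<forall>j. lam j \<le> \<mu> \<bullet> X j}"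

definition tight :: "('d::finite \<Rightarrow> real^'n) \<Rightarrow> ('d \<Rightarrow> real) \<Rightarrow> real^'n \<Rightarrow> 'd set" where
  "tight X lam \<mu> = {j. \<mu> \<bullet> X j = lam j}"

text \<open>index sets I_F of the faces F (including the interior, I = {})\<close>
definition face_idx :: "('d::finite \<Rightarrow> real^'n) \<Rightarrow> ('d \<Rightarrow> real) \<Rightarrow> 'd set set" where
  "face_idx X lam = {I. \<exists>\<mu>\<in>Delta X lam. tight X lam \<mu> = I}"

definition open_face :: "('d::finite \<Rightarrow> real^'n) \<Rightarrow> ('d \<Rightarrow> real) \<Rightarrow> 'd set \<Rightarrow> (real^'n) set" where
  "open_face X lam I = {\<mu>\<in>Delta X lam. tight X lam \<mu> = I}"

definition regular_face :: "('d::finite \<Rightarrow> real^'n) \<Rightarrow> ('d \<Rightarrow> real) \<Rightarrow> 'd set \<Rightarrow> bool" where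
  "regular_face X lam I \<longleftrightarrow> I \<in> face_idx X lam \<and>
     int (card I) = int CARD('n) - aff_dim (open_face X lam I)"

definition singular_face :: "('d::finite \<Rightarrow> real^'n) \<Rightarrow> ('d \<Rightarrow> real) \<Rightarrow> 'd set \<Rightarrow> bool" where
  "singular_face X lam I \<longleftrightarrow> I \<in> face_idx X lam \<and>
     int (card I) > int CARD('n) - aff_dim (open_face X lam I)"

text \<open>(C^*)^{F^c} for the face with index set I\<close>
definition Cstar :: "'d set \<Rightarrow> (complex^'d::finite) set" where
  "Cstar I = {z. \<forall>j. z $ j = 0 \<longleftrightarrow> j \<in> I}"

definition base_pt :: "'d set \<Rightarrow> complex^'d::finite" where
  "base_pt I = (\<chi> j. if j \<in> I then 0 else 1)"

definition CDelta :: "('d::finite \<Rightarrow> real^'n) \<Rightarrow> ('d \<Rightarrow> real) \<Rightarrow> (complex^'d) set" where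
  "CDelta X lam = {z. \<exists>I\<in>face_idx X lam. \<forall>j. j \<notin> I \<longrightarrow> z $ j \<noteq> 0}"

definition piR :: "('d::finite \<Rightarrow> real^'n) \<Rightarrow> real^'d \<Rightarrow> real^'n" where
  "piR X Y = (\<Sum>j\<in>UNIV. (Y $ j) *\<^sub>R X j)"

definition piC :: "('d::finite \<Rightarrow> real^'n) \<Rightarrow> complex^'d \<Rightarrow> complex^'n" where
  "piC X Z = (\<chi> k. \<Sum>j\<in>UNIV. Z $ j * complex_of_real (X j $ k))"

text \<open>the real vector space d as the real part of d_C\<close>
definition cvec :: "real^'a \<Rightarrow> complex^'a" where
  "cvec x = (\<chi> k. complex_of_real (x $ k))"

text \<open>action of exp(Z) in T^d_C on C^d\<close>
definition act :: "complex^'d \<Rightarrow> complex^'d \<Rightarrow> complex^'d" where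
  "act Z z = (\<chi> j. exp (2 * pi * \<i> * Z $ j) * z $ j)"

text \<open>N_C-orbit: N_C = {exp Z. piC Z in Q}\<close>
definition NC_orbit :: "('d::finite \<Rightarrow> real^'n) \<Rightarrow> (real^'n) set \<Rightarrow> complex^'d \<Rightarrow> (complex^'d) set" where
  "NC_orbit X Q z = {act Z z | Z. piC X Z \<in> cvec ` Q}"

text \<open>A-orbit, A = exp(i n), n = ker pi\<close>
definition A_orbit :: "('d::finite \<Rightarrow> real^'n) \<Rightarrow> complex^'d \<Rightarrow> (complex^'d) set" where
  "A_orbit X z = {act (\<chi> j. \<i> * complex_of_real (Y $ j)) z | Y. piR X Y = 0}"

definition A_clos :: "('d::finite \<Rightarrow> real^'n) \<Rightarrow> ('d \<Rightarrow> real) \<Rightarrow> complex^'d \<Rightarrow> (complex^'d) set" where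
  "A_clos X lam z = closure (A_orbit X z) \<inter> CDelta X lam"

text \<open>z ~ w iff N (closure A z) meets closure A w; N = {exp Y. Y real, pi Y in Q}\<close>
definition sim :: "('d::finite \<Rightarrow> real^'n) \<Rightarrow> ('d \<Rightarrow> real) \<Rightarrow> (real^'n) set \<Rightarrow>
    complex^'d \<Rightarrow> complex^'d \<Rightarrow> bool" where
  "sim X lam Q z w \<longleftrightarrow> z \<in> CDelta X lam \<and> w \<in> CDelta X lam \<and>
     (\<exists>Y. piR X Y \<in> Q \<and> act (cvec Y) ` A_clos X lam z \<inter> A_clos X lam w \<noteq> {})"

text \<open>class of z in X_Delta (w.r.t. the equivalence relation generated by sim)\<close>
definition Xcls :: "('d::finite \<Rightarrow> real^'n) \<Rightarrow> ('d \<Rightarrow> real) \<Rightarrow> (real^'n) set \<Rightarrow>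
    complex^'d \<Rightarrow> (complex^'d) set" where
  "Xcls X lam Q z = {w \<in> CDelta X lam. (symclp (sim X lam Q))\<^sup>*\<^sup>* z w}"

definition quot_top :: "'a topology \<Rightarrow> ('a \<Rightarrow> 'b) \<Rightarrow> 'b topology" where
  "quot_top T f = topology (\<lambda>U. U \<subseteq> f ` topspace T \<and> openin T {x \<in> topspace T. f x \<in> U})"

definition XDelta_top :: "('d::finite \<Rightarrow> real^'n) \<Rightarrow> ('d \<Rightarrow> real) \<Rightarrow> (real^'n) set \<Rightarrow>
    (complex^'d) set topology" where
  "XDelta_top X lam Q = quot_top (subtopology euclidean (CDelta X lam)) (Xcls X lam Q)"

definition orbit_top :: "('d::finite \<Rightarrow> real^'n) \<Rightarrow> (real^'n) set \<Rightarrow> 'd set \<Rightarrow>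
    (complex^'d) set topology" where
  "orbit_top X Q I = quot_top (subtopology euclidean (Cstar I)) (NC_orbit X Q)"

definition T_F :: "('d::finite \<Rightarrow> real^'n) \<Rightarrow> ('d \<Rightarrow> real) \<Rightarrow> (real^'n) set \<Rightarrow> 'd set \<Rightarrow>
    (complex^'d) set set" where
  "T_F X lam Q I = {Xcls X lam Q z | z. z \<in> CDelta X lam \<and> closure (A_orbit X z) \<inter> Cstar I \<noteq> {}}"

definition T_max :: "('d::finite \<Rightarrow> real^'n) \<Rightarrow> ('d \<Rightarrow> real) \<Rightarrow> (real^'n) set \<Rightarrow>
    (complex^'d) set set" where
  "T_max X lam Q = Xcls X lam Q ` (\<Union>I\<in>{I. regular_face X lam I}. Cstar I)"

end

theory Submission
  imports Defs
begin

text \<open>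
  Fix a face \<open>F\<close> with index set \<open>I\<close> and the stratum \<open>Cstar I = (\<complex>\<^sup>*)\<^sup>F\<^sup>c\<close>.  The proof rests on one
  analytic fact (\<open>A_orbit_closure_point\<close>): taking closures of orbits of \<open>A = exp(i n)\<close> inside
  \<open>CDelta\<close> never kills a coordinate that is nonzero outside \<open>I\<close>, and on those coordinates the
  limit is again a point of the orbit.  It follows from an asymptotic argument with the
  linear relation \<open>\<Sum>k. W k \<cdot> X k = 0\<close> on \<open>n = ker \<pi>\<close> and the inequalities defining \<open>\<Delta>\<close>.

  Consequently the equivalence generated by \<open>\<sim>\<close> preserves the open set \<open>U_face I\<close> of points
  with nonzero coordinates outside \<open>I\<close>, and two points of \<open>Cstar I\<close> are equivalent iff they lie
  in one \<open>N\<^sub>\<complex>\<close>-orbit.  A general lemma on quotient topologies (\<open>quot_top_embedding\<close>), applied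
  with the retraction \<open>U_face I \<rightarrow> Cstar I\<close> that kills the coordinates in \<open>I\<close>, turns this into
  a homeomorphism \<open>Cstar I / N\<^sub>\<complex> \<cong> T_F\<close>.  Finally \<open>Cstar I\<close> is a single \<open>T\<^sup>d\<^sub>\<complex>\<close>-orbit, whose image only
  depends on \<open>\<pi>\<^sub>\<complex>\<close> modulo \<open>Q\<close>, and the interior of \<open>\<Delta>\<close> is a regular face.
\<close>

lemma istopology_quot_top:
  "istopology (\<lambda>U. U \<subseteq> f ` topspace T \<and> openin T {x \<in> topspace T. f x \<in> U})"
proof -
  have "{x \<in> topspace T. f x \<in> U \<inter> V} = {x \<in> topspace T. f x \<in> U} \<inter> {x \<in> topspace T. f x \<in> V}"
    for U V by auto
  moreover have "{x \<in> topspace T. f x \<in> \<Union>K} = (\<Union>U\<in>K. {x \<in> topspace T. f x \<in> U})" for K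
    by auto
  ultimately show ?thesis
    unfolding istopology_def by (auto simp del: Collect_mem_eq)
qed

lemma openin_quot_top:
  "openin (quot_top T f) U \<longleftrightarrow> U \<subseteq> f ` topspace T \<and> openin T {x \<in> topspace T. f x \<in> U}"
  unfolding quot_top_def using topology_inverse'[OF istopology_quot_top[of f T]] by simp

lemma topspace_quot_top: "topspace (quot_top T f) = f ` topspace T"
proof -
  have "{x \<in> topspace T. f x \<in> f ` topspace T} = topspace T" by auto
  then have "openin (quot_top T f) (f ` topspace T)" by (simp add: openin_quot_top)
  then show ?thesis
    using openin_subset openin_quot_top[of T f "topspace (quot_top T f)"] by blast
qed

lemma quot_top_compatible_continuous:
  assumes S: "S \<subseteq> topspace T" and kf: "\<And>x. x \<in> S \<Longrightarrow> k (f x) = h x"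
  shows "continuous_map (quot_top (subtopology T S) f) (subtopology (quot_top T h) (h ` S)) k"
  unfolding continuous_map
proof (intro conjI allI impI)
  let ?Q = "quot_top (subtopology T S) f"
  have topQ: "topspace ?Q = f ` S" using S by (auto simp: topspace_quot_top)
  show "k ` topspace ?Q \<subseteq> topspace (subtopology (quot_top T h) (h ` S))"
    using kf by (auto simp: topQ topspace_quot_top)
  fix U assume "openin (subtopology (quot_top T h) (h ` S)) U"
  then obtain V where V: "openin (quot_top T h) V" "U = V \<inter> h ` S"
    by (auto simp: openin_subtopology)
  then have "openin T {x \<in> topspace T. h x \<in> V}" by (simp add: openin_quot_top)
  then have "openin (subtopology T S) (S \<inter> {x \<in> topspace T. h x \<in> V})"
    by (auto simp: openin_subtopology)
  moreover have "{x \<in> topspace (subtopology T S). f x \<in> {a \<in> topspace ?Q. k a \<in> U}}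
               = S \<inter> {x \<in> topspace T. h x \<in> V}"
    using S kf by (auto simp: topQ V(2)) (metis kf)
  ultimately show "openin ?Q {a \<in> topspace ?Q. k a \<in> U}"
    using S by (auto simp: openin_quot_top topQ Int_absorb2[OF S])
qed

text \<open>Openness needs more: a continuous retraction \<open>r\<close> onto \<open>S\<close> from an open neighbourhood \<open>N\<close>,
  such that \<open>N\<close> is saturated for the fibres of \<open>h\<close> and \<open>r\<close> carries \<open>h\<close>-equivalent points to
  \<open>f\<close>-equivalent points.  An open set \<open>W\<close> of \<open>S\<close> is then cut out of \<open>h(S)\<close> by the image of
  the saturated open set \<open>{x \<in> N. r x \<in> W}\<close>.\<close>

lemma quot_top_compatible_open:
  assumes S: "S \<subseteq> topspace T" and N: "openin T N" "S \<subseteq> N"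
    and r: "continuous_map (subtopology T N) (subtopology T S) r" "\<And>x. x \<in> S \<Longrightarrow> r x = x"
    and sat: "\<And>u x. u \<in> N \<Longrightarrow> x \<in> topspace T \<Longrightarrow> h x = h u \<Longrightarrow> x \<in> N \<and> f (r x) = f (r u)"
    and kf: "\<And>x. x \<in> S \<Longrightarrow> k (f x) = h x"
  shows "open_map (quot_top (subtopology T S) f) (subtopology (quot_top T h) (h ` S)) k"
  unfolding open_map_def
proof (intro allI impI)
  have NT: "N \<subseteq> topspace T" using openin_subset[OF N(1)] by simp
  have rN: "r ` N \<subseteq> S"
    using continuous_map_image_subset_topspace[OF r(1)]
    unfolding topspace_subtopology_subset[OF NT] topspace_subtopology_subset[OF S] .
  fix U assume "openin (quot_top (subtopology T S) f) U"
  then have U: "U \<subseteq> f ` S" and W: "openin (subtopology T S) {x \<in> S. f x \<in> U}"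
    unfolding openin_quot_top topspace_subtopology_subset[OF S] by auto
  define W where "W = {x \<in> S. f x \<in> U}"
  define Om where "Om = {x \<in> N. r x \<in> W}"
  have "openin (subtopology T N) Om"
    using r(1) W unfolding Om_def W_def continuous_map_def
      topspace_subtopology_subset[OF NT] topspace_subtopology_subset[OF S] by blast
  then have Om: "openin T Om" using N(1) by (rule openin_trans_full)
  have Om_sat: "x \<in> Om" if "u \<in> Om" "x \<in> topspace T" "h x = h u" for u x
  proof -
    have "x \<in> N" "f (r x) = f (r u)" using sat that unfolding Om_def by auto
    moreover have "r x \<in> S" using rN \<open>x \<in> N\<close> by blast
    ultimately show ?thesis using that(1) unfolding Om_def W_def by auto
  qed
  have W_Om: "W = Om \<inter> S" using N(2) r(2) unfolding W_def Om_def by auto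
  have "k ` U = h ` W"
    using U kf unfolding W_def by (force simp: image_iff)
  also have "\<dots> = h ` Om \<inter> h ` S"
    using Om_sat S W_Om by (auto simp: image_iff) (metis IntI subsetD)
  finally have kU: "k ` U = h ` Om \<inter> h ` S" .
  have "{x \<in> topspace T. h x \<in> h ` Om} = Om"
    using Om_sat openin_subset[OF Om] by auto
  then have "openin (quot_top T h) (h ` Om)"
    using Om openin_subset[OF Om] by (simp add: openin_quot_top image_mono)
  then show "openin (subtopology (quot_top T h) (h ` S)) (k ` U)"
    unfolding kU by (auto simp: openin_subtopology)
qed

text \<open>Under the hypotheses of \<open>quot_top_compatible_open\<close>, \<open>k\<close> identifies the quotient \<open>S/f\<close> with
  the subspace \<open>h(S)\<close> of \<open>T/h\<close>; injectivity holds since \<open>h\<close>-equivalent points of \<open>S\<close> are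
  \<open>f\<close>-equivalent (apply the retraction, which fixes \<open>S\<close>).\<close>

lemma quot_top_embedding:
  assumes S: "S \<subseteq> topspace T" and N: "openin T N" "S \<subseteq> N"
    and r: "continuous_map (subtopology T N) (subtopology T S) r" "\<And>x. x \<in> S \<Longrightarrow> r x = x"
    and sat: "\<And>u x. u \<in> N \<Longrightarrow> x \<in> topspace T \<Longrightarrow> h x = h u \<Longrightarrow> x \<in> N \<and> f (r x) = f (r u)"
    and kf: "\<And>x. x \<in> S \<Longrightarrow> k (f x) = h x"
  shows "homeomorphic_map (quot_top (subtopology T S) f) (subtopology (quot_top T h) (h ` S)) k"
proof (rule bijective_open_imp_homeomorphic_map)
  let ?Q = "quot_top (subtopology T S) f"
  have topQ: "topspace ?Q = f ` S" using S by (auto simp: topspace_quot_top)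
  show "continuous_map ?Q (subtopology (quot_top T h) (h ` S)) k"
    using S kf by (rule quot_top_compatible_continuous)
  show "open_map ?Q (subtopology (quot_top T h) (h ` S)) k"
    using S N r sat kf by (rule quot_top_compatible_open)
  have topP: "topspace (subtopology (quot_top T h) (h ` S)) = h ` S"
    using S by (auto simp: topspace_quot_top)
  show "k ` topspace ?Q = topspace (subtopology (quot_top T h) (h ` S))"
    unfolding topQ topP image_image using kf by (simp cong: image_cong)
  show "inj_on k (topspace ?Q)"
  proof (rule inj_onI, unfold topQ, clarify)
    fix x y assume "x \<in> S" "y \<in> S" "k (f x) = k (f y)"
    then show "f x = f y" using sat[of y x] r(2) N(2) S kf by auto
  qed
qed

lemma act_nth [simp]: "act Z z $ j = exp (2 * pi * \<i> * Z $ j) * z $ j"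
  by (simp add: act_def)

lemma act_act: "act Z (act Z' z) = act (Z + Z') z"
  by (simp add: vec_eq_iff distrib_left exp_add mult.assoc mult.left_commute)

lemma act_zero [simp]: "act 0 z = z"
  by (simp add: vec_eq_iff)

text \<open>Purely imaginary vectors; by \<open>act_ivec_nth\<close> they act by positive real dilations, so \<open>A\<close> consists of these.\<close>

abbreviation ivec :: "real^'a \<Rightarrow> complex^'a" where
  "ivec R \<equiv> \<chi> j. \<i> * complex_of_real (R $ j)"

lemma act_ivec_nth: "act (ivec R) u $ j = complex_of_real (exp (- 2 * pi * R $ j)) * u $ j"
proof -
  have "2 * pi * \<i> * (\<i> * complex_of_real (R $ j)) = complex_of_real (- 2 * pi * R $ j)"
    by (simp add: algebra_simps)
  then show ?thesis by (simp add: exp_of_real del: of_real_minus)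
qed

lemma piR_nth: "piR X R $ k = (\<Sum>j\<in>UNIV. R $ j * X j $ k)"
  by (simp add: piR_def sum_component)

lemma linear_piR: "linear (piR X)"
  unfolding piR_def
  by (intro linear_compose_sum ballI linearI) (simp_all add: scaleR_add_left)

lemma dilation_limit:
  fixes w :: "nat \<Rightarrow> real" and a b :: complex
  assumes lim: "(\<lambda>n. complex_of_real (exp (- 2 * pi * w n)) * a) \<longlonglongrightarrow> b" and a: "a \<noteq> 0"
  shows "(b = 0 \<and> filterlim w at_top sequentially) \<or>
         (\<exists>w0. w \<longlonglongrightarrow> w0 \<and> b = complex_of_real (exp (- 2 * pi * w0)) * a)"
proof -
  define e where "e n = exp (- 2 * pi * w n)" for n
  define L where "L = Re (b / a)"
  have "(\<lambda>n. complex_of_real (e n)) \<longlonglongrightarrow> b / a"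
    using tendsto_divide[OF lim tendsto_const a] a by (simp add: e_def)
  from tendsto_Re[OF this] tendsto_Im[OF this]
  have eL: "e \<longlonglongrightarrow> L" and "(\<lambda>n. 0) \<longlonglongrightarrow> Im (b / a)" by (simp_all add: L_def)
  then have "Im (b / a) = 0" using LIMSEQ_unique tendsto_const by blast
  then have "b / a = complex_of_real L" by (simp add: L_def complex_eq_iff)
  then have bL: "b = complex_of_real L * a" using a by (simp add: divide_eq_eq)
  have e_pos: "e n > 0" for n by (simp add: e_def)
  have "L \<ge> 0" using eL by (rule LIMSEQ_le_const) (auto intro: less_imp_le e_pos)
  have w_e: "w = (\<lambda>n. inverse (2 * pi) * - ln (e n))" by (simp add: e_def fun_eq_iff)
  show ?thesis
  proof (cases "L = 0")
    case True
    have "filterlim e (at_right 0) sequentially"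
      using eL True e_pos by (auto intro: tendsto_imp_filterlim_at_right)
    then have "filterlim (\<lambda>n. ln (e n)) at_bot sequentially"
      by (rule filterlim_compose[OF ln_at_0])
    then have "filterlim w at_top sequentially"
      unfolding w_e
      by (intro filterlim_tendsto_pos_mult_at_top[OF tendsto_const])
         (auto simp: filterlim_uminus_at_bot[symmetric])
    then show ?thesis using True bL by simp
  next
    case False
    then have "L > 0" using \<open>L \<ge> 0\<close> by simp
    have "w \<longlonglongrightarrow> inverse (2 * pi) * - ln L"
      unfolding w_e using \<open>L > 0\<close> by (intro tendsto_intros eL) auto
    moreover have "exp (- 2 * pi * (inverse (2 * pi) * - ln L)) = L"
    using \<open>L > 0\<close> by (simp add: mult.assoc[symmetric])
    ultimately show ?thesis using bL by metis
  qed
qed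

text \<open>For \<open>W n \<in> ker \<pi>\<close> we have \<open>\<Sum>k. W n k \<cdot> \<langle>\<nu>, X k\<rangle> = \<langle>\<nu>, \<pi> (W n)\<rangle> = 0\<close>.
  If the coordinates in \<open>E\<close> escape to \<open>+\<infinity>\<close> with \<open>\<langle>\<nu>, X k\<rangle> \<ge> 0\<close> and all other terms are bounded
  below, then this sum would tend to \<open>+\<infinity>\<close> unless \<open>\<langle>\<nu>, X j\<rangle> = 0\<close> on \<open>E\<close>.\<close>

lemma kernel_escape_orthogonal:
  fixes W :: "nat \<Rightarrow> real^'d::finite" and X :: "'d \<Rightarrow> real^'n"
  assumes ker: "\<And>n. piR X (W n) = 0"
    and esc: "\<And>k. k \<in> E \<Longrightarrow> filterlim (\<lambda>n. W n $ k) at_top sequentially \<and> 0 \<le> \<nu> \<bullet> X k"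
    and bdd: "\<And>k. k \<notin> E \<Longrightarrow> \<exists>B. eventually (\<lambda>n. B \<le> W n $ k * (\<nu> \<bullet> X k)) sequentially"
    and j: "j \<in> E"
  shows "\<nu> \<bullet> X j = 0"
proof (rule ccontr)
  assume "\<nu> \<bullet> X j \<noteq> 0"
  then have cj: "\<nu> \<bullet> X j > 0" using esc[OF j] by simp
  let ?a = "\<lambda>k n. W n $ k * (\<nu> \<bullet> X k)"
  have "\<exists>B. eventually (\<lambda>n. B \<le> ?a k n) sequentially" for k
  proof (cases "k \<in> E")
    case True
    then have "eventually (\<lambda>n. 0 \<le> W n $ k) sequentially"
      using esc by (simp add: filterlim_at_top)
    moreover have "0 \<le> \<nu> \<bullet> X k" using esc[OF True] by simp
    ultimately have "eventually (\<lambda>n. 0 \<le> ?a k n) sequentially"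
      by (auto elim: eventually_mono)
    then show ?thesis by blast
  qed (use bdd in blast)
  then obtain B where B: "\<And>k. eventually (\<lambda>n. B k \<le> ?a k n) sequentially" by metis
  have "eventually (\<lambda>n. \<forall>k\<in>UNIV - {j}. B k \<le> ?a k n) sequentially"
    using B by (intro eventually_ball_finite) auto
  then have below: "eventually (\<lambda>n. (\<Sum>k\<in>UNIV - {j}. B k) + ?a j n \<le> (\<Sum>k\<in>UNIV. ?a k n)) sequentially"
    by eventually_elim (auto simp: sum.remove[of UNIV j] intro!: sum_mono)
  have "filterlim (?a j) at_top sequentially"
    using esc[OF j] by (auto intro: filterlim_at_top_mult_tendsto_pos[OF tendsto_const cj])
  then have "filterlim (\<lambda>n. (\<Sum>k\<in>UNIV - {j}. B k) + ?a j n) at_top sequentially"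
    by (rule filterlim_tendsto_add_at_top[OF tendsto_const])
  then have "filterlim (\<lambda>n. \<Sum>k\<in>UNIV. ?a k n) at_top sequentially"
    using below by (rule filterlim_at_top_mono)
  moreover have "(\<Sum>k\<in>UNIV. ?a k n) = \<nu> \<bullet> piR X (W n)" for n
    by (simp add: piR_def inner_sum_right mult.commute)
  ultimately have "filterlim (\<lambda>n. 0::real) at_top sequentially" by (simp add: ker)
  then show False by (auto simp: filterlim_at_top dest: spec[of _ 1])
qed

text \<open>The coordinate projection of the subspace \<open>ker \<pi>\<close> is a subspace, hence closed: limits of
  kernel vectors, observed on the coordinates outside \<open>I\<close>, are restrictions of kernel vectors.\<close>

lemma kernel_limit_off:
  fixes W :: "nat \<Rightarrow> real^'d::finite" and X :: "'d \<Rightarrow> real^'n"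
  assumes ker: "\<And>n. piR X (W n) = 0"
    and lim: "\<And>j. j \<notin> I \<Longrightarrow> (\<lambda>n. W n $ j) \<longlonglongrightarrow> w j"
  shows "\<exists>R. piR X R = 0 \<and> (\<forall>j. j \<notin> I \<longrightarrow> R $ j = w j)"
proof -
  define mask :: "real^'d \<Rightarrow> real^'d" where "mask R = (\<chi> j. if j \<in> I then 0 else R $ j)" for R
  have "linear mask" unfolding mask_def by (intro linearI) (auto simp: vec_eq_iff)
  then have "subspace (mask ` {R. piR X R = 0})"
    by (intro linear_subspace_image linear_subspace_kernel linear_piR)
  then have closed: "closed (mask ` {R. piR X R = 0})" by (rule closed_subspace)
  have "(\<lambda>n. mask (W n)) \<longlonglongrightarrow> (\<chi> j. if j \<in> I then 0 else w j)"
    unfolding mask_def by (intro tendsto_vec_lambda) (auto intro: lim)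
  moreover have "mask (W n) \<in> mask ` {R. piR X R = 0}" for n using ker by blast
  ultimately have "(\<chi> j. if j \<in> I then 0 else w j) \<in> mask ` {R. piR X R = 0}"
    using closed_sequentially[OF closed, of "\<lambda>n. mask (W n)"] by blast
  then obtain R where "piR X R = 0" "mask R = (\<chi> j. if j \<in> I then 0 else w j)"
    by (auto simp: image_iff)
  then show ?thesis by (metis (mono_tags, lifting) mask_def vec_lambda_beta)
qed

text \<open>The open set of points with nonvanishing coordinates outside \<open>I\<close>; it is the union of
  the strata \<open>Cstar J\<close> with \<open>J \<subseteq> I\<close>.\<close>

definition U_face :: "'d set \<Rightarrow> (complex^'d::finite) set" where
  "U_face I = {u. \<forall>j. j \<notin> I \<longrightarrow> u $ j \<noteq> 0}"

lemma A_orbit_closure_coords: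
  fixes X :: "'d::finite \<Rightarrow> real^'n"
  assumes "p \<in> closure (A_orbit X u)"
  obtains W :: "nat \<Rightarrow> real^'d" and w :: "'d \<Rightarrow> real"
  where "\<And>n. piR X (W n) = 0"
    and "\<And>k. u $ k = 0 \<Longrightarrow> p $ k = 0"
    and "\<And>k. u $ k \<noteq> 0 \<Longrightarrow> p $ k = 0 \<Longrightarrow> filterlim (\<lambda>n. W n $ k) at_top sequentially"
    and "\<And>k. u $ k \<noteq> 0 \<Longrightarrow> p $ k \<noteq> 0 \<Longrightarrow>
           (\<lambda>n. W n $ k) \<longlonglongrightarrow> w k \<and> p $ k = complex_of_real (exp (- 2 * pi * w k)) * u $ k"
proof -
  obtain f where f: "\<And>n. f n \<in> A_orbit X u" "f \<longlonglongrightarrow> p"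
    using assms unfolding closure_sequential by blast
  then have "\<forall>n. \<exists>R. piR X R = 0 \<and> f n = act (ivec R) u"
    unfolding A_orbit_def by blast
  then obtain W where ker: "\<And>n. piR X (W n) = 0" and fW: "\<And>n. f n = act (ivec (W n)) u"
    by metis
  have "f = (\<lambda>n. act (ivec (W n)) u)" by (simp add: fun_eq_iff fW)
  with f(2) have lim: "(\<lambda>n. act (ivec (W n)) u) \<longlonglongrightarrow> p" by simp
  have lim_k: "(\<lambda>n. complex_of_real (exp (- 2 * pi * W n $ k)) * u $ k) \<longlonglongrightarrow> p $ k" for k
    using tendsto_vec_nth[OF lim, of k] by (simp only: act_ivec_nth)
  have p_zero: "p $ k = 0" if "u $ k = 0" for k
    using LIMSEQ_unique[OF lim_k[of k]] that by simp
  have "\<exists>w. u $ k \<noteq> 0 \<longrightarrow>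
      (p $ k = 0 \<and> filterlim (\<lambda>n. W n $ k) at_top sequentially) \<or>
      ((\<lambda>n. W n $ k) \<longlonglongrightarrow> w \<and> p $ k = complex_of_real (exp (- 2 * pi * w)) * u $ k)" for k
    using dilation_limit[OF lim_k[of k]] by blast
  then obtain w where w: "\<And>k. u $ k \<noteq> 0 \<Longrightarrow>
      (p $ k = 0 \<and> filterlim (\<lambda>n. W n $ k) at_top sequentially) \<or>
      ((\<lambda>n. W n $ k) \<longlonglongrightarrow> w k \<and> p $ k = complex_of_real (exp (- 2 * pi * w k)) * u $ k)"
    by metis
  show ?thesis
  proof (rule that[OF ker p_zero])
    fix k assume "u $ k \<noteq> 0" "p $ k = 0"
    then show "filterlim (\<lambda>n. W n $ k) at_top sequentially" using w[of k] by auto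
  next
    fix k assume "u $ k \<noteq> 0" "p $ k \<noteq> 0"
    then show "(\<lambda>n. W n $ k) \<longlonglongrightarrow> w k \<and> p $ k = complex_of_real (exp (- 2 * pi * w k)) * u $ k"
      using w[of k] by blast
  qed
qed

text \<open>A lost
  coordinate would be tight at the face \<open>L\<close> of the limit (realised by \<open>mu1\<close>) but not at \<open>mu0\<close>;
  \<open>kernel_escape_orthogonal\<close> with \<open>\<nu> = mu0 - mu1\<close> shows that this cannot happen.\<close>

lemma A_orbit_closure_support:
  fixes X :: "'d::finite \<Rightarrow> real^'n"
  assumes u: "u \<in> U_face I" and p: "p \<in> closure (A_orbit X u)" "p \<in> CDelta X lam"
    and mu0: "mu0 \<in> Delta X lam" "tight X lam mu0 = I"
  shows "p \<in> U_face I"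
proof -
  obtain W w where ker: "\<And>n. piR X (W n) = 0" and p_zero: "\<And>k. u $ k = 0 \<Longrightarrow> p $ k = 0"
    and lost: "\<And>k. u $ k \<noteq> 0 \<Longrightarrow> p $ k = 0 \<Longrightarrow> filterlim (\<lambda>n. W n $ k) at_top sequentially"
    and kept: "\<And>k. u $ k \<noteq> 0 \<Longrightarrow> p $ k \<noteq> 0 \<Longrightarrow> (\<lambda>n. W n $ k) \<longlonglongrightarrow> w k"
    using A_orbit_closure_coords[OF p(1)] by metis
  obtain L where L: "L \<in> face_idx X lam" "\<And>j. j \<notin> L \<Longrightarrow> p $ j \<noteq> 0"
    using p(2) unfolding CDelta_def by blast
  obtain mu1 where mu1: "mu1 \<in> Delta X lam" "tight X lam mu1 = L"
    using L(1) unfolding face_idx_def by blast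
  have tight_p: "mu1 \<bullet> X k = lam k" if "p $ k = 0" for k
    using L(2) mu1(2) that unfolding tight_def by blast
  define E where "E = {k. u $ k \<noteq> 0 \<and> p $ k = 0}"
  have "(mu0 - mu1) \<bullet> X j = 0" if "j \<in> E" for j
  proof (rule kernel_escape_orthogonal[OF ker _ _ that])
    fix k assume "k \<in> E"
    then have uk: "u $ k \<noteq> 0" and pk: "p $ k = 0" by (simp_all add: E_def)
    have "lam k \<le> mu0 \<bullet> X k" using mu0(1) by (simp add: Delta_def)
    then have "0 \<le> (mu0 - mu1) \<bullet> X k" using tight_p[OF pk] by (simp add: inner_diff_left)
    with lost[OF uk pk]
    show "filterlim (\<lambda>n. W n $ k) at_top sequentially \<and> 0 \<le> (mu0 - mu1) \<bullet> X k" ..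
  next
    fix k assume k: "k \<notin> E"
    show "\<exists>B. eventually (\<lambda>n. B \<le> W n $ k * ((mu0 - mu1) \<bullet> X k)) sequentially"
    proof (cases "u $ k = 0")
      case True
      then have "k \<in> I" using u by (auto simp: U_face_def)
      then have "(mu0 - mu1) \<bullet> X k = 0"
        using mu0(2) tight_p[OF p_zero[OF True]] by (auto simp: tight_def inner_diff_left)
      then show ?thesis by (auto intro: exI[of _ 0])
    next
      case False
      then have "(\<lambda>n. W n $ k * ((mu0 - mu1) \<bullet> X k)) \<longlonglongrightarrow> w k * ((mu0 - mu1) \<bullet> X k)"
        using k kept by (intro tendsto_mult_right) (simp add: E_def)
      then have "eventually (\<lambda>n. w k * ((mu0 - mu1) \<bullet> X k) - 1 < W n $ k * ((mu0 - mu1) \<bullet> X k))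
          sequentially"
        by (rule order_tendstoD(1)) simp
      then show ?thesis by (auto intro: eventually_mono less_imp_le)
    qed
  qed
  then have "E \<subseteq> I"
    using mu0(2) tight_p unfolding tight_def E_def by (force simp: inner_diff_left)
  then show ?thesis
    using u unfolding U_face_def E_def by blast
qed

text \<open>On the coordinates outside \<open>I\<close> such a limit point agrees with a point of the \<open>A\<close>-orbit
  itself: the exponents converge there, and \<open>kernel_limit_off\<close> provides a limiting element
  of \<open>ker \<pi>\<close>.\<close>

lemma A_orbit_closure_point:
  fixes X :: "'d::finite \<Rightarrow> real^'n"
  assumes u: "u \<in> U_face I" and p: "p \<in> closure (A_orbit X u)" "p \<in> CDelta X lam"
    and mu0: "mu0 \<in> Delta X lam" "tight X lam mu0 = I"
  shows "p \<in> U_face I \<and> (\<exists>R. piR X R = 0 \<and> (\<forall>j. j \<notin> I \<longrightarrow> p $ j = act (ivec R) u $ j))"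
proof -
  have p_face: "p \<in> U_face I" by (rule A_orbit_closure_support[OF u p mu0])
  obtain W w where ker: "\<And>n. piR X (W n) = 0"
    and kept: "\<And>k. u $ k \<noteq> 0 \<Longrightarrow> p $ k \<noteq> 0 \<Longrightarrow>
           (\<lambda>n. W n $ k) \<longlonglongrightarrow> w k \<and> p $ k = complex_of_real (exp (- 2 * pi * w k)) * u $ k"
    using A_orbit_closure_coords[OF p(1)] by metis
  have kept_off: "(\<lambda>n. W n $ j) \<longlonglongrightarrow> w j \<and> p $ j = complex_of_real (exp (- 2 * pi * w j)) * u $ j"
    if "j \<notin> I" for j
    using kept u p_face that by (simp add: U_face_def)
  have "\<exists>R. piR X R = 0 \<and> (\<forall>j. j \<notin> I \<longrightarrow> R $ j = w j)"
    by (rule kernel_limit_off[where W=W and X=X and I=I and w=w, OF ker]) (use kept_off in blast)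
  then obtain R where R: "piR X R = 0" "\<And>j. j \<notin> I \<Longrightarrow> R $ j = w j" by blast
  have "p $ j = act (ivec R) u $ j" if "j \<notin> I" for j
    using kept_off[OF that] by (subst act_ivec_nth) (simp add: R(2)[OF that])
  then show ?thesis using p_face R(1) by blast
qed

lemma piC_real_scaled:
  "piC X (\<chi> j. a * complex_of_real (R $ j)) = (\<chi> k. a * complex_of_real (piR X R $ k))"
  by (simp add: vec_eq_iff piC_def piR_nth sum_distrib_left mult.assoc)

lemma cvec_zero: "cvec 0 = 0"
  by (simp add: cvec_def vec_eq_iff)

lemma piC_cvec: "piC X (cvec R) = cvec (piR X R)"
  using piC_real_scaled[of X 1 R] by (simp add: cvec_def)

lemma piC_ivec: "piC X (ivec R) = ivec (piR X R)"
  by (rule piC_real_scaled)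

lemma piC_add: "piC X (Z + Z') = piC X Z + piC X Z'"
  by (simp add: vec_eq_iff piC_def distrib_right sum.distrib)

lemma piC_diff: "piC X (Z - Z') = piC X Z - piC X Z'"
  by (simp add: vec_eq_iff piC_def left_diff_distrib sum_subtractf)

lemma piC_uminus: "piC X (- Z) = - piC X Z"
  by (simp add: vec_eq_iff piC_def sum_negf)

text \<open>An element of \<open>N\<^sub>\<complex>\<close> splits into a real part in \<open>N\<close> and an imaginary part in \<open>A\<close>,
  i.e. \<open>N\<^sub>\<complex> = N \<cdot> A\<close>.\<close>

lemma vec_re_im_split: "Z = cvec (\<chi> j. Re (Z $ j)) + ivec (\<chi> j. Im (Z $ j))"
  by (simp add: vec_eq_iff cvec_def complex_eq_iff)

lemma NC_re_im_parts:
  assumes "piC X Z \<in> cvec ` Q"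
  shows "piR X (\<chi> j. Re (Z $ j)) \<in> Q" "piR X (\<chi> j. Im (Z $ j)) = 0"
proof -
  obtain q where q: "q \<in> Q" "piC X Z = cvec q" using assms by auto
  have "piC X Z = cvec (piR X (\<chi> j. Re (Z $ j))) + ivec (piR X (\<chi> j. Im (Z $ j)))"
    by (metis piC_add piC_cvec piC_ivec vec_re_im_split)
  then have "\<forall>k. piR X (\<chi> j. Re (Z $ j)) $ k = q $ k \<and> piR X (\<chi> j. Im (Z $ j)) $ k = 0"
    using q(2) by (simp add: vec_eq_iff cvec_def complex_eq_iff)
  then have "piR X (\<chi> j. Re (Z $ j)) = q" "piR X (\<chi> j. Im (Z $ j)) = 0"
    by (simp_all add: vec_eq_iff)
  then show "piR X (\<chi> j. Re (Z $ j)) \<in> Q" "piR X (\<chi> j. Im (Z $ j)) = 0"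
    using q(1) by simp_all
qed

lemma zspan_subgroup:
  shows "0 \<in> zspan S"
    and "a \<in> zspan S \<Longrightarrow> b \<in> zspan S \<Longrightarrow> a + b \<in> zspan S"
    and "a \<in> zspan S \<Longrightarrow> - a \<in> zspan S"
proof -
  show "0 \<in> zspan S" unfolding zspan_def by (auto intro!: exI[of _ "\<lambda>_. 0"])
next
  assume "a \<in> zspan S" "b \<in> zspan S"
  then obtain c c' where "a = (\<Sum>v\<in>S. real_of_int (c v) *\<^sub>R v)" "b = (\<Sum>v\<in>S. real_of_int (c' v) *\<^sub>R v)"
    unfolding zspan_def by blast
  then have "a + b = (\<Sum>v\<in>S. real_of_int (c v + c' v) *\<^sub>R v)"
    by (simp add: sum.distrib scaleR_add_left)
  then show "a + b \<in> zspan S" unfolding zspan_def by (auto intro!: exI[of _ "\<lambda>v. c v + c' v"])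
next
  assume "a \<in> zspan S"
  then obtain c where "a = (\<Sum>v\<in>S. real_of_int (c v) *\<^sub>R v)" unfolding zspan_def by blast
  then have "- a = (\<Sum>v\<in>S. real_of_int (- c v) *\<^sub>R v)" by (simp add: sum_negf)
  then show "- a \<in> zspan S" unfolding zspan_def by (auto intro!: exI[of _ "\<lambda>v. - c v"])
qed

lemma NC_subgroup:
  assumes "quasilattice Q"
  shows "piC X 0 \<in> cvec ` Q"
    and "piC X Z \<in> cvec ` Q \<Longrightarrow> piC X Z' \<in> cvec ` Q \<Longrightarrow> piC X (Z + Z') \<in> cvec ` Q"
    and "piC X Z \<in> cvec ` Q \<Longrightarrow> piC X (- Z) \<in> cvec ` Q"
proof -
  obtain S where Q: "Q = zspan S" using assms unfolding quasilattice_def by blast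
  have cvec_add: "cvec (a + b) = cvec a + cvec b" and cvec_uminus: "cvec (- a) = - cvec a" for a b
    by (simp_all add: cvec_def vec_eq_iff)
  have "piC X 0 = cvec 0" by (simp add: vec_eq_iff piC_def cvec_def)
  then show "piC X 0 \<in> cvec ` Q" unfolding Q using zspan_subgroup(1) by blast
  show "piC X (Z + Z') \<in> cvec ` Q" if Z: "piC X Z \<in> cvec ` Q" "piC X Z' \<in> cvec ` Q"
  proof -
    obtain x y where "x \<in> Q" "y \<in> Q" "piC X Z = cvec x" "piC X Z' = cvec y" using Z by blast
    then have "x + y \<in> Q" "piC X (Z + Z') = cvec (x + y)"
      using zspan_subgroup(2) by (auto simp: Q piC_add cvec_add)
    then show ?thesis by blast
  qed
  show "piC X (- Z) \<in> cvec ` Q" if Z: "piC X Z \<in> cvec ` Q"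
  proof -
    obtain x where "x \<in> Q" "piC X Z = cvec x" using Z by blast
    then have "- x \<in> Q" "piC X (- Z) = cvec (- x)"
      using zspan_subgroup(3) by (auto simp: Q piC_uminus cvec_uminus)
    then show ?thesis by blast
  qed
qed

text \<open>This is the
  invariant propagated along chains of the relation \<open>\<sim>\<close>; it is an equivalence relation.\<close>

definition NC_rel_off :: "('d::finite \<Rightarrow> real^'n) \<Rightarrow> (real^'n) set \<Rightarrow> 'd set \<Rightarrow>
    complex^'d \<Rightarrow> complex^'d \<Rightarrow> bool" where
  "NC_rel_off X Q I u v \<longleftrightarrow> (\<exists>Z. piC X Z \<in> cvec ` Q \<and> (\<forall>j. j \<notin> I \<longrightarrow> v $ j = act Z u $ j))"

lemma NC_rel_off_refl: "quasilattice Q \<Longrightarrow> NC_rel_off X Q I u u"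
  unfolding NC_rel_off_def using NC_subgroup(1) by (metis act_zero)

lemma NC_rel_off_sym:
  assumes Q: "quasilattice Q" and uv: "NC_rel_off X Q I u v"
  shows "NC_rel_off X Q I v u"
proof -
  obtain Z where Z: "piC X Z \<in> cvec ` Q" "\<And>j. j \<notin> I \<Longrightarrow> v $ j = act Z u $ j"
    using uv unfolding NC_rel_off_def by blast
  have "u $ j = act (- Z) v $ j" if "j \<notin> I" for j
    using Z(2)[OF that] by (simp add: mult.assoc[symmetric] exp_add[symmetric])
  then show ?thesis unfolding NC_rel_off_def using NC_subgroup(3)[OF Q Z(1)] by blast
qed

lemma NC_rel_off_trans:
  assumes Q: "quasilattice Q" and "NC_rel_off X Q I u v" "NC_rel_off X Q I v w"
  shows "NC_rel_off X Q I u w"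
proof -
  obtain Z Z' where Z: "piC X Z \<in> cvec ` Q" "\<And>j. j \<notin> I \<Longrightarrow> v $ j = act Z u $ j"
    and Z': "piC X Z' \<in> cvec ` Q" "\<And>j. j \<notin> I \<Longrightarrow> w $ j = act Z' v $ j"
    using assms(2,3) unfolding NC_rel_off_def by blast
  have "w $ j = act (Z' + Z) u $ j" if "j \<notin> I" for j
    using Z(2)[OF that] Z'(2)[OF that] by (simp add: distrib_left exp_add)
  then show ?thesis unfolding NC_rel_off_def using NC_subgroup(2)[OF Q Z'(1) Z(1)] by blast
qed

lemma U_face_act [simp]: "act Z p \<in> U_face I \<longleftrightarrow> p \<in> U_face I"
  by (simp add: U_face_def)

lemma Cstar_U_face: "Cstar I \<subseteq> U_face I"
  unfolding Cstar_def U_face_def by auto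

lemma U_face_CDelta: "I \<in> face_idx X lam \<Longrightarrow> U_face I \<subseteq> CDelta X lam"
  unfolding U_face_def CDelta_def by blast

lemma Cstar_CDelta: "I \<in> face_idx X lam \<Longrightarrow> Cstar I \<subseteq> CDelta X lam"
  using Cstar_U_face U_face_CDelta by blast

lemma act_CDelta [simp]: "act Z z \<in> CDelta X lam \<longleftrightarrow> z \<in> CDelta X lam"
  by (simp add: CDelta_def)

lemma A_orbit_self: "u \<in> A_orbit X u"
proof -
  have "act (ivec 0) u = u" "piR X 0 = 0" by (simp_all add: vec_eq_iff piR_def)
  then show ?thesis unfolding A_orbit_def by force
qed

lemma A_clos_self: "u \<in> CDelta X lam \<Longrightarrow> u \<in> A_clos X lam u"
  unfolding A_clos_def using A_orbit_self closure_subset by blast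

lemma closure_A_orbit_zero:
  assumes "v $ j = 0" "q \<in> closure (A_orbit X v)"
  shows "q $ j = 0"
proof -
  have "A_orbit X v \<subseteq> {x. x $ j = 0}" using assms(1) by (auto simp: A_orbit_def)
  moreover have "closed {x::complex^'a. x $ j = 0}"
    by (intro closed_Collect_eq continuous_intros)
  ultimately show ?thesis using assms(2) closure_minimal by blast
qed

lemma U_face_closure_A_orbit: "q \<in> closure (A_orbit X v) \<Longrightarrow> q \<in> U_face I \<Longrightarrow> v \<in> U_face I"
  unfolding U_face_def using closure_A_orbit_zero by blast

lemma A_clos_NC_rel_off:
  assumes Q: "quasilattice Q" and u: "u \<in> U_face I" and p: "p \<in> A_clos X lam u"
    and mu0: "mu0 \<in> Delta X lam" "tight X lam mu0 = I"
  shows "p \<in> U_face I \<and> NC_rel_off X Q I u p"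
proof -
  obtain R where "p \<in> U_face I" "piR X R = 0" "\<And>j. j \<notin> I \<Longrightarrow> p $ j = act (ivec R) u $ j"
    using A_orbit_closure_point[OF u _ _ mu0] p unfolding A_clos_def by blast
  moreover have "piC X (ivec R) \<in> cvec ` Q" if "piR X R = 0"
  proof -
    have "piC X (ivec R) = 0" using that by (simp add: piC_ivec vec_eq_iff)
    moreover have "piC X 0 = 0" by (simp add: piC_def vec_eq_iff)
    ultimately show ?thesis using NC_subgroup(1)[OF Q, of X] by metis
  qed
  ultimately show ?thesis unfolding NC_rel_off_def by blast
qed

lemma NC_rel_off_translate:
  "piR X Y \<in> Q \<Longrightarrow> NC_rel_off X Q I p (act (cvec Y) p)"
  unfolding NC_rel_off_def by (intro exI[of _ "cvec Y"]) (auto simp: piC_cvec)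

lemma sim_preserves_face:
  assumes Q: "quasilattice Q" and u: "u \<in> U_face I" and mu0: "mu0 \<in> Delta X lam" "tight X lam mu0 = I"
    and s: "symclp (sim X lam Q) u v"
  shows "v \<in> U_face I \<and> NC_rel_off X Q I u v"
  using s unfolding symclp_def
proof
  assume "sim X lam Q u v"
  then obtain Y p where Y: "piR X Y \<in> Q" "p \<in> A_clos X lam u" "act (cvec Y) p \<in> A_clos X lam v"
    unfolding sim_def by blast
  have p: "p \<in> U_face I" "NC_rel_off X Q I u p"
    using A_clos_NC_rel_off[OF Q u Y(2) mu0] by auto
  have v: "v \<in> U_face I"
    using Y(3) p(1) U_face_closure_A_orbit unfolding A_clos_def by (metis IntD1 U_face_act)
  have "NC_rel_off X Q I v (act (cvec Y) p)"
    using A_clos_NC_rel_off[OF Q v Y(3) mu0] by blast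
  then have "NC_rel_off X Q I u v"
    using NC_rel_off_trans[OF Q NC_rel_off_trans[OF Q p(2) NC_rel_off_translate[OF Y(1)]]]
      NC_rel_off_sym[OF Q] by blast
  then show ?thesis using v by blast
next
  assume "sim X lam Q v u"
  then obtain Y p where Y: "piR X Y \<in> Q" "p \<in> A_clos X lam v" "act (cvec Y) p \<in> A_clos X lam u"
    unfolding sim_def by blast
  have p: "act (cvec Y) p \<in> U_face I" "NC_rel_off X Q I u (act (cvec Y) p)"
    using A_clos_NC_rel_off[OF Q u Y(3) mu0] by auto
  have v: "v \<in> U_face I"
    using Y(2) p(1) U_face_closure_A_orbit unfolding A_clos_def by (metis IntD1 U_face_act)
  have "NC_rel_off X Q I v p"
    using A_clos_NC_rel_off[OF Q v Y(2) mu0] by blast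
  then have "NC_rel_off X Q I u v"
    using NC_rel_off_trans[OF Q p(2) NC_rel_off_sym[OF Q NC_rel_off_translate[OF Y(1)]]]
      NC_rel_off_trans[OF Q] NC_rel_off_sym[OF Q] by blast
  then show ?thesis using v by blast
qed

lemma Xcls_preserves_face:
  assumes Q: "quasilattice Q" and I: "I \<in> face_idx X lam" and u: "u \<in> U_face I"
    and w: "w \<in> Xcls X lam Q u"
  shows "w \<in> U_face I \<and> NC_rel_off X Q I u w"
proof -
  obtain mu0 where mu0: "mu0 \<in> Delta X lam" "tight X lam mu0 = I"
    using I unfolding face_idx_def by blast
  have "(symclp (sim X lam Q))\<^sup>*\<^sup>* u w" using w unfolding Xcls_def by blast
  then show ?thesis
  proof (induction rule: rtranclp_induct)
    case base
    then show ?case using u NC_rel_off_refl[OF Q] by blast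
  next
    case (step y z)
    then show ?case
      using sim_preserves_face[OF Q _ mu0, of y z] NC_rel_off_trans[OF Q] by blast
  qed
qed

text \<open>Conversely, \<open>N\<^sub>\<complex>\<close>-equivalent points are \<open>\<sim>\<close>-related: write \<open>N\<^sub>\<complex> = N \<cdot> A\<close>.\<close>

lemma sim_NC_orbit:
  assumes z: "z \<in> CDelta X lam" and x: "x \<in> NC_orbit X Q z"
  shows "sim X lam Q z x"
proof -
  obtain Z where Z: "x = act Z z" "piC X Z \<in> cvec ` Q" using x unfolding NC_orbit_def by blast
  define Re_Z Im_Z where "Re_Z = (\<chi> j. Re (Z $ j))" and "Im_Z = (\<chi> j. Im (Z $ j))"
  have Y: "piR X Re_Z \<in> Q" and A: "piR X Im_Z = 0"
    using NC_re_im_parts[OF Z(2)] unfolding Re_Z_def Im_Z_def by auto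
  have "act (ivec Im_Z) z \<in> A_clos X lam z"
    using A z closure_subset unfolding A_clos_def A_orbit_def by fastforce
  moreover have "x = act (cvec Re_Z) (act (ivec Im_Z) z)"
    using Z(1) vec_re_im_split[of Z] by (simp add: act_act Re_Z_def Im_Z_def add.commute)
  moreover have "x \<in> A_clos X lam x" using z Z(1) by (simp add: A_clos_self)
  ultimately show ?thesis unfolding sim_def using z Y Z(1) by auto
qed

lemma Xcls_eq_of_sim:
  assumes "sim X lam Q z x"
  shows "Xcls X lam Q z = Xcls X lam Q x"
proof -
  have "symclp (sim X lam Q) z x" "symclp (sim X lam Q) x z" using assms by (auto simp: symclp_def)
  then show ?thesis unfolding Xcls_def by (blast intro: converse_rtranclp_into_rtranclp)
qed

lemma Xcls_self: "z \<in> CDelta X lam \<Longrightarrow> z \<in> Xcls X lam Q z"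
  unfolding Xcls_def by simp

lemma Cstar_NC_rel_off_NC_orbit:
  assumes "z \<in> Cstar I" "w \<in> Cstar I" "NC_rel_off X Q I z w"
  shows "w \<in> NC_orbit X Q z"
proof -
  obtain Z where Z: "piC X Z \<in> cvec ` Q" "\<And>j. j \<notin> I \<Longrightarrow> w $ j = act Z z $ j"
    using assms(3) unfolding NC_rel_off_def by blast
  have "w $ j = act Z z $ j" for j
  proof (cases "j \<in> I")
    case True
    then have "z $ j = 0" "w $ j = 0" using assms(1,2) by (simp_all add: Cstar_def)
    then show ?thesis by simp
  qed (use Z(2) in simp)
  then have "w = act Z z" by (simp add: vec_eq_iff)
  then show ?thesis unfolding NC_orbit_def using Z(1) by blast
qed

lemma Xcls_eq_iff_NC_orbit:
  assumes Q: "quasilattice Q" and I: "I \<in> face_idx X lam" and z: "z \<in> Cstar I" and w: "w \<in> Cstar I"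
  shows "Xcls X lam Q z = Xcls X lam Q w \<longleftrightarrow> w \<in> NC_orbit X Q z"
proof
  have CD: "Cstar I \<subseteq> CDelta X lam" by (rule Cstar_CDelta[OF I])
  {
    assume "Xcls X lam Q z = Xcls X lam Q w"
    then have "w \<in> Xcls X lam Q z" using Xcls_self CD w by blast
    then have "NC_rel_off X Q I z w"
      using Xcls_preserves_face[OF Q I] z Cstar_U_face by blast
    then show "w \<in> NC_orbit X Q z" using Cstar_NC_rel_off_NC_orbit z w by blast
  next
    assume "w \<in> NC_orbit X Q z"
    then show "Xcls X lam Q z = Xcls X lam Q w" using Xcls_eq_of_sim sim_NC_orbit CD z by blast
  }
qed

text \<open>The stratum \<open>Cstar I\<close> is the \<open>T\<^sup>d\<^sub>\<complex>\<close>-orbit of its base point (via the complex logarithm).\<close>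

lemma Cstar_act_base_pt: "Cstar I = {act Z (base_pt I) | Z. True}"
proof (intro set_eqI iffI)
  fix z assume z: "z \<in> Cstar I"
  define Z where "Z = (\<chi> j. Ln (z $ j) / (2 * pi * \<i>))"
  have "act Z (base_pt I) $ j = z $ j" for j
    using z by (cases "j \<in> I") (simp_all add: base_pt_def Z_def Cstar_def)
  then have "act Z (base_pt I) = z" by (simp add: vec_eq_iff)
  then show "z \<in> {act Z (base_pt I) | Z. True}" by blast
next
  fix z assume "z \<in> {act Z (base_pt I) | Z. True}"
  then show "z \<in> Cstar I" by (auto simp: Cstar_def base_pt_def split: if_splits)
qed

text \<open>The class of \<open>exp(Z)\<cdot>base\<close> only depends on \<open>\<pi>\<^sub>\<complex>(Z)\<close> modulo \<open>Q\<close>, so the image of the stratum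
  is an orbit of the quasitorus \<open>D\<^sub>\<complex> = d\<^sub>\<complex>/Q\<close>.\<close>

lemma Xcls_act_base_pt:
  assumes I: "I \<in> face_idx X lam" and QZ: "piC X Z - piC X Z' \<in> cvec ` Q"
  shows "Xcls X lam Q (act Z (base_pt I)) = Xcls X lam Q (act Z' (base_pt I))"
proof -
  have "base_pt I \<in> Cstar I" by (auto simp: Cstar_def base_pt_def)
  then have C: "act Z' (base_pt I) \<in> CDelta X lam"
    using Cstar_CDelta[OF I] by auto
  have "act Z (base_pt I) = act (Z - Z') (act Z' (base_pt I))" by (simp add: act_act)
  then have "act Z (base_pt I) \<in> NC_orbit X Q (act Z' (base_pt I))"
    using QZ unfolding NC_orbit_def by (auto simp: piC_diff)
  from Xcls_eq_of_sim[OF sim_NC_orbit[OF C this]] show ?thesis by simp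
qed

text \<open>\<open>T_F\<close> is the image of the stratum: orbit closures meeting the stratum are \<open>\<sim>\<close>-equivalent to it.\<close>

lemma T_F_eq_image:
  assumes Q: "quasilattice Q" and I: "I \<in> face_idx X lam"
  shows "T_F X lam Q I = Xcls X lam Q ` Cstar I"
proof (intro set_eqI iffI)
  have CD: "Cstar I \<subseteq> CDelta X lam" by (rule Cstar_CDelta[OF I])
  {
    fix c assume "c \<in> T_F X lam Q I"
    then obtain z p where z: "c = Xcls X lam Q z" "z \<in> CDelta X lam"
      and p: "p \<in> closure (A_orbit X z)" "p \<in> Cstar I"
      unfolding T_F_def by blast
    have pC: "p \<in> CDelta X lam" using p(2) CD by blast
    have "piR X 0 \<in> Q"
      using Q zspan_subgroup(1) unfolding quasilattice_def by (auto simp: piR_def)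
    moreover have "act (cvec 0) p \<in> act (cvec 0) ` A_clos X lam z \<inter> A_clos X lam p"
      using p(1) pC A_clos_self[OF pC] by (simp add: A_clos_def cvec_zero)
    ultimately have "sim X lam Q z p" unfolding sim_def using z(2) pC by blast
    then show "c \<in> Xcls X lam Q ` Cstar I" using z(1) p(2) Xcls_eq_of_sim by blast
  next
    fix c assume "c \<in> Xcls X lam Q ` Cstar I"
    then show "c \<in> T_F X lam Q I"
      unfolding T_F_def using CD A_orbit_self closure_subset by blast
  }
qed

definition proj_face :: "'d set \<Rightarrow> complex^'d::finite \<Rightarrow> complex^'d" where
  "proj_face I u = (\<chi> j. if j \<in> I then 0 else u $ j)"

lemma proj_face_Cstar: "u \<in> U_face I \<Longrightarrow> proj_face I u \<in> Cstar I"
  by (auto simp: proj_face_def U_face_def Cstar_def)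

lemma proj_face_id: "z \<in> Cstar I \<Longrightarrow> proj_face I z = z"
  by (auto simp: proj_face_def Cstar_def vec_eq_iff)

lemma NC_rel_off_proj_face:
  "NC_rel_off X Q I u v \<Longrightarrow> NC_rel_off X Q I (proj_face I u) (proj_face I v)"
  unfolding NC_rel_off_def proj_face_def by auto

lemma continuous_proj_face: "continuous_on UNIV (proj_face (I :: 'd::finite set))"
  unfolding proj_face_def
proof (intro continuous_on_vec_lambda)
  fix j
  have "continuous_on UNIV (\<lambda>u::complex^'d. u $ j)"
    by (rule linear_continuous_on[OF bounded_linear_vec_nth])
  then show "continuous_on UNIV (\<lambda>u::complex^'d. if j \<in> I then 0 else u $ j)"
    by (cases "j \<in> I") simp_all
qed

lemma open_U_face: "open (U_face (I :: 'd::finite set))"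
proof -
  have "U_face I = (\<Inter>j\<in>-I. {u. u $ j \<noteq> 0})" by (auto simp: U_face_def)
  moreover have "open {u::complex^'d. u $ j \<noteq> 0}" for j
    by (intro open_Collect_neq continuous_intros)
  ultimately show ?thesis by (auto intro!: open_INT)
qed

lemma NC_orbit_self: "quasilattice Q \<Longrightarrow> z \<in> NC_orbit X Q z"
  unfolding NC_orbit_def by (rule CollectI, rule exI[of _ 0]) (simp add: NC_subgroup(1))

lemma NC_orbit_act:
  assumes Q: "quasilattice Q" and Z: "piC X Z \<in> cvec ` Q"
  shows "NC_orbit X Q (act Z z) = NC_orbit X Q z"
proof (intro set_eqI iffI)
  fix x assume "x \<in> NC_orbit X Q (act Z z)"
  then obtain Z' where "x = act (Z' + Z) z" "piC X Z' \<in> cvec ` Q"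
    unfolding NC_orbit_def act_act by blast
  then show "x \<in> NC_orbit X Q z"
    using NC_subgroup(2)[OF Q _ Z] unfolding NC_orbit_def by blast
next
  fix x assume "x \<in> NC_orbit X Q z"
  then obtain Z' where "x = act (Z' + - Z) (act Z z)" "piC X Z' \<in> cvec ` Q"
    unfolding NC_orbit_def act_act by auto
  then show "x \<in> NC_orbit X Q (act Z z)"
    using NC_subgroup(2)[OF Q _ NC_subgroup(3)[OF Q Z]] unfolding NC_orbit_def by blast
qed

definition orbit_class :: "('d::finite \<Rightarrow> real^'n) \<Rightarrow> ('d \<Rightarrow> real) \<Rightarrow> (real^'n) set \<Rightarrow>
    (complex^'d) set \<Rightarrow> (complex^'d) set" where
  "orbit_class X lam Q Ob = Xcls X lam Q (SOME z. z \<in> Ob)"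

lemma orbit_class_NC_orbit:
  assumes Q: "quasilattice Q" and z: "z \<in> CDelta X lam"
  shows "orbit_class X lam Q (NC_orbit X Q z) = Xcls X lam Q z"
proof -
  define w where "w = (SOME w. w \<in> NC_orbit X Q z)"
  have "w \<in> NC_orbit X Q z" unfolding w_def
    by (rule someI[of "\<lambda>w. w \<in> NC_orbit X Q z", OF NC_orbit_self[OF Q]])
  then have "Xcls X lam Q z = Xcls X lam Q w" by (rule Xcls_eq_of_sim[OF sim_NC_orbit[OF z]])
  then show ?thesis by (simp add: orbit_class_def w_def)
qed

text \<open>The saturation hypothesis of \<open>quot_top_embedding\<close>: points equivalent to a point of
  \<open>U_face I\<close> stay in it, and the retraction maps them to the same \<open>N\<^sub>\<complex>\<close>-orbit.\<close>

lemma Xcls_proj_face_saturated: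
  assumes Q: "quasilattice Q" and I: "I \<in> face_idx X lam"
    and u: "u \<in> U_face I" and x: "x \<in> CDelta X lam" and eq: "Xcls X lam Q x = Xcls X lam Q u"
  shows "x \<in> U_face I \<and> NC_orbit X Q (proj_face I x) = NC_orbit X Q (proj_face I u)"
proof -
  have "x \<in> Xcls X lam Q u" using eq Xcls_self[OF x] by blast
  then have x_face: "x \<in> U_face I" and "NC_rel_off X Q I u x"
    using Xcls_preserves_face[OF Q I u] by auto
  then have "proj_face I x \<in> NC_orbit X Q (proj_face I u)"
    by (intro Cstar_NC_rel_off_NC_orbit[where I=I] proj_face_Cstar u NC_rel_off_proj_face)
  then obtain Z where "proj_face I x = act Z (proj_face I u)" "piC X Z \<in> cvec ` Q"
    unfolding NC_orbit_def by blast
  then show ?thesis using x_face NC_orbit_act[OF Q] by simp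
qed

lemma orbit_space_homeomorphic_T_F:
  assumes Q: "quasilattice Q" and I: "I \<in> face_idx X lam"
  shows "homeomorphic_map (orbit_top X Q I) (subtopology (XDelta_top X lam Q) (T_F X lam Q I))
           (orbit_class X lam Q)"
proof -
  let ?T = "top_of_set (CDelta X lam)"
  have CD: "Cstar I \<subseteq> CDelta X lam" by (rule Cstar_CDelta[OF I])
  have UD: "U_face I \<subseteq> CDelta X lam" by (rule U_face_CDelta[OF I])
  have "continuous_map (top_of_set (U_face I)) (top_of_set (Cstar I)) (proj_face I)"
    using continuous_on_subset[OF continuous_proj_face] proj_face_Cstar
    by (auto simp: continuous_map_in_subtopology)
  then have r: "continuous_map (subtopology ?T (U_face I)) (subtopology ?T (Cstar I)) (proj_face I)"
    using CD UD by (simp add: subtopology_subtopology Int_absorb1)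
  have "homeomorphic_map (quot_top (subtopology ?T (Cstar I)) (NC_orbit X Q))
          (subtopology (quot_top ?T (Xcls X lam Q)) (Xcls X lam Q ` Cstar I)) (orbit_class X lam Q)"
  proof (rule quot_top_embedding[OF _ _ Cstar_U_face r])
    show "Cstar I \<subseteq> topspace ?T" using CD by simp
    show "openin ?T (U_face I)" using UD open_U_face by (rule open_subset)
    show "z \<in> Cstar I \<Longrightarrow> proj_face I z = z" for z by (rule proj_face_id)
    show "x \<in> U_face I \<and> NC_orbit X Q (proj_face I x) = NC_orbit X Q (proj_face I u)"
      if "u \<in> U_face I" "x \<in> topspace ?T" "Xcls X lam Q x = Xcls X lam Q u" for u x
      using Xcls_proj_face_saturated[OF Q I] that by simp
    show "z \<in> Cstar I \<Longrightarrow> orbit_class X lam Q (NC_orbit X Q z) = Xcls X lam Q z" for z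
      using orbit_class_NC_orbit[OF Q] CD by blast
  qed
  then show ?thesis
    using CD unfolding orbit_top_def XDelta_top_def T_F_eq_image[OF Q I]
    by (simp add: subtopology_subtopology Int_absorb1)
qed

text \<open>The interior of \<open>\<Delta>\<close> is a regular face: a relative interior point misses every facet,
  and the interior is open, hence of full dimension.\<close>

lemma interior_face_regular:
  fixes X :: "'d::finite \<Rightarrow> real^'n"
  assumes poly: "polytope (Delta X lam)"
    and facets: "\<forall>j. {\<mu> \<in> Delta X lam. \<mu> \<bullet> X j = lam j} facet_of Delta X lam"
  shows "regular_face X lam {}"
proof -
  have conv: "convex (Delta X lam)" using poly by (rule polytope_imp_convex)
  have "{\<mu> \<in> Delta X lam. \<mu> \<bullet> X undefined = lam undefined} facet_of Delta X lam"
    using facets by (rule spec)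
  then have "Delta X lam \<noteq> {}" unfolding facet_of_def by auto
  then obtain mu where mu: "mu \<in> rel_interior (Delta X lam)"
    using rel_interior_eq_empty[OF conv] by blast
  then have mu_Delta: "mu \<in> Delta X lam" using rel_interior_subset by blast
  have mu_ne: "mu \<bullet> X j \<noteq> lam j" for j
  proof -
    let ?F = "{\<mu> \<in> Delta X lam. \<mu> \<bullet> X j = lam j}"
    have F: "?F facet_of Delta X lam" using facets by (rule spec)
    then have "?F \<noteq> Delta X lam" by auto
    then have "?F \<inter> rel_interior (Delta X lam) = {}"
      by (rule face_of_disjoint_rel_interior[OF facet_of_imp_face_of[OF F]])
    then show ?thesis using mu mu_Delta by blast
  qed
  moreover have "lam j \<le> mu \<bullet> X j" for j using mu_Delta by (simp add: Delta_def)
  ultimately have mu_int: "lam j < mu \<bullet> X j" for j by (metis order_less_le)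
  have open_face_int: "open_face X lam {} = (\<Inter>k. {x. lam k < x \<bullet> X k})"
  proof (intro set_eqI iffI)
    fix x assume "x \<in> open_face X lam {}"
    then have "lam k \<le> x \<bullet> X k" "x \<bullet> X k \<noteq> lam k" for k
      unfolding open_face_def Delta_def tight_def by auto
    then have "lam k < x \<bullet> X k" for k by (metis order_less_le)
    then show "x \<in> (\<Inter>k. {x. lam k < x \<bullet> X k})" by blast
  next
    fix x assume "x \<in> (\<Inter>k. {x. lam k < x \<bullet> X k})"
    then have "lam k < x \<bullet> X k" for k by blast
    then have "lam k \<le> x \<bullet> X k" "x \<bullet> X k \<noteq> lam k" for k
      by (metis less_imp_le, metis less_irrefl)
    then show "x \<in> open_face X lam {}"
      unfolding open_face_def Delta_def tight_def by auto
  qed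
  have "open {x::real^'n. lam k < x \<bullet> X k}" for k
    using open_halfspace_gt[of "lam k" "X k"] by (simp add: inner_commute)
  then have "open (\<Inter>k. {x::real^'n. lam k < x \<bullet> X k})" by (auto intro: open_INT)
  moreover have "mu \<in> (\<Inter>k. {x. lam k < x \<bullet> X k})" using mu_int by blast
  ultimately have "aff_dim (open_face X lam {}) = int DIM(real^'n)"
    unfolding open_face_int by (intro aff_dim_open) auto
  moreover have "tight X lam mu = {}" using mu_ne by (simp add: tight_def)
  then have "{} \<in> face_idx X lam" using mu_Delta unfolding face_idx_def by blast
  ultimately show ?thesis unfolding regular_face_def by simp
qed


lemma face_stratum_orbit:
  assumes Q: "quasilattice Q" and I: "I \<in> face_idx X lam"
  shows "(\<exists>\<phi>. homeomorphic_map (orbit_top X Q I)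
                 (subtopology (XDelta_top X lam Q) (T_F X lam Q I)) \<phi> \<and>
              (\<forall>z\<in>Cstar I. \<phi> (NC_orbit X Q z) = Xcls X lam Q z))
      \<and> T_F X lam Q I = {Xcls X lam Q (act Z (base_pt I)) | Z. True}
      \<and> (\<forall>Z Z'. piC X Z - piC X Z' \<in> cvec ` Q \<longrightarrow>
            Xcls X lam Q (act Z (base_pt I)) = Xcls X lam Q (act Z' (base_pt I)))"
    and "Xcls X lam Q ` Cstar I = {Xcls X lam Q (act Z (base_pt I)) | Z. True}
        \<and> (\<forall>Z Z'. piC X Z - piC X Z' \<in> cvec ` Q \<longrightarrow>
            Xcls X lam Q (act Z (base_pt I)) = Xcls X lam Q (act Z' (base_pt I)))
        \<and> (\<forall>z\<in>Cstar I. \<forall>w\<in>Cstar I. Xcls X lam Q z = Xcls X lam Q w \<longleftrightarrow> w \<in> NC_orbit X Q z)"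
proof -
  have homeo: "\<exists>\<phi>. homeomorphic_map (orbit_top X Q I)
                 (subtopology (XDelta_top X lam Q) (T_F X lam Q I)) \<phi> \<and>
              (\<forall>z\<in>Cstar I. \<phi> (NC_orbit X Q z) = Xcls X lam Q z)"
    using Cstar_CDelta[OF I]
    by (intro exI[of _ "orbit_class X lam Q"] conjI ballI orbit_space_homeomorphic_T_F[OF Q I]
        orbit_class_NC_orbit[OF Q]) blast
  have image: "Xcls X lam Q ` Cstar I = {Xcls X lam Q (act Z (base_pt I)) | Z. True}"
    unfolding Cstar_act_base_pt by blast
  have quasitorus_orbit: "\<forall>Z Z'. piC X Z - piC X Z' \<in> cvec ` Q \<longrightarrow>
            Xcls X lam Q (act Z (base_pt I)) = Xcls X lam Q (act Z' (base_pt I))"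
    by (intro allI impI) (rule Xcls_act_base_pt[OF I])
  have classes:
    "\<forall>z\<in>Cstar I. \<forall>w\<in>Cstar I. Xcls X lam Q z = Xcls X lam Q w \<longleftrightarrow> w \<in> NC_orbit X Q z"
    by (intro ballI) (rule Xcls_eq_iff_NC_orbit[OF Q I])
  have "T_F X lam Q I = {Xcls X lam Q (act Z (base_pt I)) | Z. True}"
    by (simp only: T_F_eq_image[OF Q I] image)
  with homeo quasitorus_orbit
  show "(\<exists>\<phi>. homeomorphic_map (orbit_top X Q I)
                 (subtopology (XDelta_top X lam Q) (T_F X lam Q I)) \<phi> \<and>
              (\<forall>z\<in>Cstar I. \<phi> (NC_orbit X Q z) = Xcls X lam Q z))
      \<and> T_F X lam Q I = {Xcls X lam Q (act Z (base_pt I)) | Z. True}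
      \<and> (\<forall>Z Z'. piC X Z - piC X Z' \<in> cvec ` Q \<longrightarrow>
            Xcls X lam Q (act Z (base_pt I)) = Xcls X lam Q (act Z' (base_pt I)))"
    by (intro conjI)
  from image quasitorus_orbit classes
  show "Xcls X lam Q ` Cstar I = {Xcls X lam Q (act Z (base_pt I)) | Z. True}
        \<and> (\<forall>Z Z'. piC X Z - piC X Z' \<in> cvec ` Q \<longrightarrow>
            Xcls X lam Q (act Z (base_pt I)) = Xcls X lam Q (act Z' (base_pt I)))
        \<and> (\<forall>z\<in>Cstar I. \<forall>w\<in>Cstar I. Xcls X lam Q z = Xcls X lam Q w \<longleftrightarrow> w \<in> NC_orbit X Q z)"
    by (intro conjI)
qed

theorem mainTheorem6:
  fixes X :: "'d::finite \<Rightarrow> real^'n" and lam :: "'d \<Rightarrow> real" and Q :: "(real^'n) set"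
  assumes "polytope (Delta X lam)"
    and "aff_dim (Delta X lam) = int CARD('n)"
    and "\<forall>j. {\<mu> \<in> Delta X lam. \<mu> \<bullet> X j = lam j} facet_of Delta X lam"
    and "inj (\<lambda>j. {\<mu> \<in> Delta X lam. \<mu> \<bullet> X j = lam j})"
    and "quasilattice Q" and "\<forall>j. X j \<in> Q"
  shows
    "(\<forall>I. singular_face X lam I \<longrightarrow>
        (\<exists>\<phi>. homeomorphic_map (orbit_top X Q I)
                 (subtopology (XDelta_top X lam Q) (T_F X lam Q I)) \<phi> \<and>
              (\<forall>z\<in>Cstar I. \<phi> (NC_orbit X Q z) = Xcls X lam Q z))
      \<and> T_F X lam Q I = {Xcls X lam Q (act Z (base_pt I)) | Z. True}
      \<and> (\<forall>Z Z'. piC X Z - piC X Z' \<in> cvec ` Q \<longrightarrow>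
            Xcls X lam Q (act Z (base_pt I)) = Xcls X lam Q (act Z' (base_pt I))))
     \<and> T_max X lam Q = (\<Union>I\<in>{I. regular_face X lam I}. Xcls X lam Q ` Cstar I)
     \<and> (\<forall>I. regular_face X lam I \<longrightarrow>
          Xcls X lam Q ` Cstar I = {Xcls X lam Q (act Z (base_pt I)) | Z. True}
        \<and> (\<forall>Z Z'. piC X Z - piC X Z' \<in> cvec ` Q \<longrightarrow>
            Xcls X lam Q (act Z (base_pt I)) = Xcls X lam Q (act Z' (base_pt I)))
        \<and> (\<forall>z\<in>Cstar I. \<forall>w\<in>Cstar I. Xcls X lam Q z = Xcls X lam Q w \<longleftrightarrow> w \<in> NC_orbit X Q z))
     \<and> regular_face X lam {}
     \<and> Xcls X lam Q ` Cstar {} \<subseteq> T_max X lam Q"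
proof -
  have face_idx: "I \<in> face_idx X lam" if "singular_face X lam I \<or> regular_face X lam I" for I
    using that by (auto simp: singular_face_def regular_face_def)
  have T_max_union: "T_max X lam Q = (\<Union>I\<in>{I. regular_face X lam I}. Xcls X lam Q ` Cstar I)"
    unfolding T_max_def by (rule image_UN)
  have interior: "regular_face X lam {}"
    using assms(1,3) by (rule interior_face_regular)
  then have "Xcls X lam Q ` Cstar {} \<subseteq> T_max X lam Q"
    unfolding T_max_union by blast
  with T_max_union interior show ?thesis
    by (intro face_stratum_orbit[OF assms(5) face_idx] conjI allI impI) simp_all
qed

end
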